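(* Suppose the family of update functions $\mathrm{Upd}$ satisfies P1 and P2. Let $\mathcal{M}=(W,\mathcal{F})$ be a measure space, $\Pr\in\Delta_{\mathcal{M}}$, $A,B\in\mathcal{F}$, and suppose that for some $\Pr'\in\mathrm{Upd}^{\mathcal{M}}(\Pr,B)$ we have $0<\Pr(A|B)<1$ and $\Pr'(A)<\Pr(A|B)$. Then there exists $\Pr''\in\mathrm{Upd}^{\mathcal{M}}(\Pr,B)$ with $\Pr''(A)>\Pr(A|B)$.
   Context: A measure space is a pair $\mathcal{M}=(W,\mathcal{F})$ with $\mathcal{F}$ an algebra of subsets of $W$; $\Delta_{\mathcal{M}}$ is the set of all probability measures on $\mathcal{M}$. An update function on $\mathcal{M}$ is a map $\mathrm{Upd}^{\mathcal{M}}:2^{\Delta_{\mathcal{M}}}\times\mathcal{F}\to 2^{\Delta_{\mathcal{M}}}$ such that $\mathrm{Upd}^{\mathcal{M}}(X,B)=\emptyset$ whenever $\Pr(B)=0$ for all $\Pr\in X$; $\mathrm{Upd}^{\mathcal{M}}(\Pr,B)$ means $\mathrm{Upd}^{\mathcal{M}}(\{\Pr\},B)$. A family $\mathrm{Upd}=\{\mathrm{Upd}^{\mathcal{M}}\}$ has one update function for each measure space. $\Pr(A|B)=\Pr(A\cap B)/\Pr(B)$. A representation shift from $\mathcal{M}=(W,\mathcal{F})$ to $\mathcal{M}'=(W',\mathcal{F}')$ is a surjection $f:W\to W'$ with $f^{-1}(B)\in\mathcal{F}$ for all $B\in\mathcal{F}'$; $(f^*(\Pr))(A)=\Pr(f^{-1}(A))$,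 $f^*(X)=\{f^*(\Pr):\Pr\in X\}$. P1: for all $\mathcal{M}$, $X\subseteq\Delta_{\mathcal{M}}$, $B\in\mathcal{F}$: $\mathrm{Upd}^{\mathcal{M}}(X,B)\subseteq\{\Pr\in\Delta_{\mathcal{M}}:\Pr(B)=1\}$. P2: for every representation shift $f$ from $\mathcal{M}$ to $\mathcal{M}'$, every $X\subseteq\Delta_{\mathcal{M}}$ and $B\in\mathcal{F}'$: $\mathrm{Upd}^{\mathcal{M}'}(f^*(X),B)=f^*(\mathrm{Upd}^{\mathcal{M}}(X,f^{-1}(B)))$. *)

theory Defs
  imports "HOL-Analysis.Sigma_Algebra"
begin

text \<open>Measure spaces: pairs (W, F) with F an algebra of subsets of W (library notion
  algebra W F).  All measure spaces considered have points drawn from one fixed type 'w.\<close>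

definition prob_measures :: "'w set \<Rightarrow> 'w set set \<Rightarrow> ('w set \<Rightarrow> real) set" where
  "prob_measures W F = {P.
      (\<forall>A\<in>F. 0 \<le> P A) \<and> P W = 1 \<and>
      (\<forall>A\<in>F. \<forall>B\<in>F. A \<inter> B = {} \<longrightarrow> P (A \<union> B) = P A + P B) \<and>
      (\<forall>A. A \<notin> F \<longrightarrow> P A = 0)}"

definition cond_prob :: "('w set \<Rightarrow> real) \<Rightarrow> 'w set \<Rightarrow> 'w set \<Rightarrow> real" where
  "cond_prob P A B = P (A \<inter> B) / P B"

type_synonym 'w upd_family =
  "'w set \<Rightarrow> 'w set set \<Rightarrow> ('w set \<Rightarrow> real) set \<Rightarrow> 'w set \<Rightarrow> ('w set \<Rightarrow> real) set"

definition update_function :: "'w set \<Rightarrow> 'w set set \<Rightarrow>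
    (('w set \<Rightarrow> real) set \<Rightarrow> 'w set \<Rightarrow> ('w set \<Rightarrow> real) set) \<Rightarrow> bool" where
  "update_function W F U \<longleftrightarrow>
     (\<forall>X B. X \<subseteq> prob_measures W F \<longrightarrow> B \<in> F \<longrightarrow>
        U X B \<subseteq> prob_measures W F \<and>
        ((\<forall>P\<in>X. P B = 0) \<longrightarrow> U X B = {}))"

definition family_of_update_functions :: "'w upd_family \<Rightarrow> bool" where
  "family_of_update_functions Upd \<longleftrightarrow>
     (\<forall>W F. algebra W F \<longrightarrow> update_function W F (Upd W F))"

definition rep_shift :: "('w \<Rightarrow> 'w) \<Rightarrow> 'w set \<Rightarrow> 'w set set \<Rightarrow> 'w set \<Rightarrow> 'w set set \<Rightarrow> bool" where
  "rep_shift f W F W' F' \<longleftrightarrow> f ` W = W' \<and> (\<forall>B\<in>F'. f -` B \<inter> W \<in> F)"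

definition pushforward :: "('w \<Rightarrow> 'w) \<Rightarrow> 'w set \<Rightarrow> 'w set set \<Rightarrow> ('w set \<Rightarrow> real) \<Rightarrow> ('w set \<Rightarrow> real)" where
  "pushforward f W F' P = (\<lambda>A. if A \<in> F' then P (f -` A \<inter> W) else 0)"

definition P1 :: "'w upd_family \<Rightarrow> bool" where
  "P1 Upd \<longleftrightarrow> (\<forall>W F X B. algebra W F \<longrightarrow> X \<subseteq> prob_measures W F \<longrightarrow> B \<in> F \<longrightarrow>
      Upd W F X B \<subseteq> {P \<in> prob_measures W F. P B = 1})"

definition P2 :: "'w upd_family \<Rightarrow> bool" where
  "P2 Upd \<longleftrightarrow> (\<forall>W F W' F' f X B. algebra W F \<longrightarrow> algebra W' F' \<longrightarrow>
      rep_shift f W F W' F' \<longrightarrow> X \<subseteq> prob_measures W F \<longrightarrow> B \<in> F' \<longrightarrow>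
      Upd W' F' (pushforward f W F' ` X) B =
        pushforward f W F' ` Upd W F X (f -` B \<inter> W))"

end

theory Submission
  imports Defs "HOL-Analysis.Kronecker_Approximation_Theorem"
begin

text \<open>
  Suppose every update of \<open>Pr\<close> by \<open>B\<close> gives \<open>A\<close> probability at most \<open>a = Pr(A|B)\<close>. By P2 we may
  pass to the three atoms \<open>x = A \<inter> B\<close>, \<open>y = B - A\<close>, \<open>t = W - B\<close>. There we refine: for \<open>N > 0\<close> and
  \<open>k = \<lfloor>N a\<rfloor>\<close> take \<open>N\<close> points of weight \<open>\<mu> = Pr(B - A) / (N - k)\<close>, one of weight
  \<open>Pr(A \<inter> B) - k \<mu>\<close> and one of weight \<open>Pr(W - B)\<close>. The \<open>n\<close>-th of \<open>N\<close> rotations sends a cyclic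
  window of \<open>k\<close> of the \<open>N\<close> points, and the point of weight \<open>Pr(A \<inter> B) - k \<mu>\<close>, to \<open>x\<close>, the
  other \<open>N - k\<close> points to \<open>y\<close> and the last point to \<open>t\<close>. Every rotation pushes the refined prior to the coarse one and pulls
  \<open>B\<close> back to the same event, so by P2 a single update \<open>R\<close> of the refined prior yields \<open>N\<close> updates
  of the coarse prior. By P1, \<open>R\<close> lives on that event, each of whose points is sent to \<open>x\<close> by at
  least \<open>k\<close> rotations; hence the \<open>x\<close>-masses of the \<open>N\<close> updates sum to at least \<open>k\<close>. All of them
  are at most \<open>a\<close>, so each is at least \<open>k - (N - 1) a\<close>, which is close to \<open>a\<close> once \<open>N a\<close> is close
  above an integer. Thus every update gives \<open>A \<inter> B\<close> mass at least \<open>a\<close>, contradicting \<open>Pr'\<close>.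
\<close>

lemma prob_measures_nonneg: "P \<in> prob_measures W F \<Longrightarrow> A \<in> F \<Longrightarrow> 0 \<le> P A"
  unfolding prob_measures_def by blast

lemma prob_measures_space: "P \<in> prob_measures W F \<Longrightarrow> P W = 1"
  unfolding prob_measures_def by blast

lemma prob_measures_additive:
  "P \<in> prob_measures W F \<Longrightarrow> A \<in> F \<Longrightarrow> B \<in> F \<Longrightarrow> A \<inter> B = {} \<Longrightarrow> P (A \<union> B) = P A + P B"
  unfolding prob_measures_def by blast

lemma prob_measures_Int_Diff:
  assumes "algebra W F" "P \<in> prob_measures W F" "A \<in> F" "B \<in> F"
  shows "P A = P (A \<inter> B) + P (A - B)"
proof -
  interpret algebra W F by fact
  have "P ((A \<inter> B) \<union> (A - B)) = P (A \<inter> B) + P (A - B)"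
    using assms by (intro prob_measures_additive) auto
  moreover have "(A \<inter> B) \<union> (A - B) = A" by blast
  ultimately show ?thesis by simp
qed

lemma prob_measures_empty:
  assumes "algebra W F" "P \<in> prob_measures W F"
  shows "P {} = 0"
proof -
  interpret algebra W F by fact
  show ?thesis using prob_measures_Int_Diff[OF assms, of "{}" "{}"] by simp
qed

lemma prob_measures_Int_le:
  assumes "algebra W F" "P \<in> prob_measures W F" "A \<in> F" "B \<in> F"
  shows "P (A \<inter> B) \<le> P A"
proof -
  interpret algebra W F by fact
  show ?thesis using prob_measures_Int_Diff[OF assms] prob_measures_nonneg[OF assms(2) Diff[OF assms(3,4)]]
    by simp
qed

lemma prob_measures_compl:
  assumes "algebra W F" "P \<in> prob_measures W F" "B \<in> F"
  shows "P (W - B) = 1 - P B"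
proof -
  interpret algebra W F by fact
  have "W \<inter> B = B" using assms(3) sets_into_space by blast
  then show ?thesis
    using prob_measures_Int_Diff[OF assms(1,2) top assms(3)] prob_measures_space[OF assms(2)] by simp
qed

lemma prob_measures_le_1:
  assumes "algebra W F" "P \<in> prob_measures W F" "B \<in> F"
  shows "P B \<le> 1"
proof -
  interpret algebra W F by fact
  show ?thesis using prob_measures_compl[OF assms] prob_measures_nonneg[OF assms(2) compl_sets[OF assms(3)]]
    by simp
qed

lemma pushforward_prob_measures:
  assumes "algebra W' F'" "rep_shift f W F W' F'" "P \<in> prob_measures W F"
  shows "pushforward f W F' P \<in> prob_measures W' F'"
proof -
  interpret algebra W' F' by fact
  have vimage: "f -` B \<inter> W \<in> F" if "B \<in> F'" for B
    using assms(2) that unfolding rep_shift_def by blast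
  have "f -` W' \<inter> W = W" using assms(2) unfolding rep_shift_def by blast
  then have "pushforward f W F' P W' = 1"
    using prob_measures_space[OF assms(3)] unfolding pushforward_def by simp
  moreover have "pushforward f W F' P (A \<union> B) = pushforward f W F' P A + pushforward f W F' P B"
    if "A \<in> F'" "B \<in> F'" "A \<inter> B = {}" for A B
  proof -
    have "P ((f -` A \<inter> W) \<union> (f -` B \<inter> W)) = P (f -` A \<inter> W) + P (f -` B \<inter> W)"
      using that vimage by (intro prob_measures_additive[OF assms(3)]) auto
    moreover have "(f -` A \<inter> W) \<union> (f -` B \<inter> W) = f -` (A \<union> B) \<inter> W" by blast
    ultimately show ?thesis using that unfolding pushforward_def by auto
  qed
  ultimately show ?thesis using vimage prob_measures_nonneg[OF assms(3)]
    unfolding prob_measures_def pushforward_def by auto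
qed

definition point_mass_measure :: "'a set \<Rightarrow> ('a \<Rightarrow> real) \<Rightarrow> 'a set \<Rightarrow> real" where
  "point_mass_measure N w = (\<lambda>S. if S \<subseteq> N then sum w S else 0)"

lemma point_mass_measure_prob_measures:
  assumes "finite N" "\<And>q. q \<in> N \<Longrightarrow> 0 \<le> w q" "sum w N = 1"
  shows "point_mass_measure N w \<in> prob_measures N (Pow N)"
  unfolding prob_measures_def point_mass_measure_def using assms
  by (auto intro!: sum_nonneg sum.union_disjoint intro: finite_subset)

lemma prob_measures_Pow_sum:
  assumes "finite N" "P \<in> prob_measures N (Pow N)" "S \<subseteq> N"
  shows "P S = (\<Sum>q\<in>S. P {q})"
  using finite_subset[OF assms(3,1)] assms(3)
proof (induction S rule: finite_subset_induct')
  case empty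
  then show ?case using prob_measures_empty[OF algebra_Pow assms(2)] by simp
next
  case (insert a S)
  have "P ({a} \<union> S) = P {a} + P S" using insert by (intro prob_measures_additive[OF assms(2)]) auto
  then show ?case using insert by simp
qed

lemma prob_measures_Pow_eqI:
  assumes "finite N" "P \<in> prob_measures N (Pow N)" "R \<in> prob_measures N (Pow N)"
    and "\<And>q. q \<in> N \<Longrightarrow> P {q} = R {q}"
  shows "P = R"
proof (rule ext)
  fix S
  show "P S = R S"
  proof (cases "S \<subseteq> N")
    case True
    then show ?thesis using prob_measures_Pow_sum[OF assms(1,2) True] prob_measures_Pow_sum[OF assms(1,3) True]
      assms(4) by (auto intro: sum.cong)
  next
    case False
    then show ?thesis using assms(2,3) unfolding prob_measures_def by auto
  qed
qed

lemma vimage_relabel: "inj g \<Longrightarrow> (\<phi> \<circ> inv g) -` S \<inter> g ` I = g ` {i\<in>I. \<phi> i \<in> S}"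
  by auto

lemma rep_shift_relabel:
  "inj g \<Longrightarrow> \<phi> ` I = W0 \<Longrightarrow> rep_shift (\<phi> \<circ> inv g) (g ` I) (Pow (g ` I)) W0 (Pow W0)"
  unfolding rep_shift_def by (auto simp: image_comp)

lemma prob_measures_Pow_image_sum:
  assumes "inj g" "finite I" "R \<in> prob_measures (g ` I) (Pow (g ` I))" "J \<subseteq> I"
  shows "R (g ` J) = (\<Sum>i\<in>J. R {g i})"
  using prob_measures_Pow_sum[OF finite_imageI[OF assms(2)] assms(3)] assms(4)
  by (simp add: image_mono sum.reindex inj_on_subset[OF assms(1)])

lemma pushforward_relabel_singleton:
  assumes "inj g" "finite I" "R \<in> prob_measures (g ` I) (Pow (g ` I))" "p \<in> W0"
  shows "pushforward (\<phi> \<circ> inv g) (g ` I) (Pow W0) R {p} = (\<Sum>i\<in>I. if \<phi> i = p then R {g i} else 0)"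
proof -
  have "pushforward (\<phi> \<circ> inv g) (g ` I) (Pow W0) R {p} = R (g ` {i\<in>I. \<phi> i = p})"
    using assms(1,4) unfolding pushforward_def vimage_relabel[OF assms(1)] by simp
  also have "\<dots> = (\<Sum>i\<in>{i\<in>I. \<phi> i = p}. R {g i})"
    by (rule prob_measures_Pow_image_sum[OF assms(1-3)]) auto
  also have "\<dots> = (\<Sum>i\<in>I. if \<phi> i = p then R {g i} else 0)"
    using assms(2) by (simp add: sum.inter_filter)
  finally show ?thesis .
qed

section \<open>Cyclic windows\<close>

lemma bij_betw_add_mod:
  assumes "0 < N"
  shows "bij_betw (\<lambda>j. (j + n) mod N) {..<N} {..<(N::nat)}"
proof -
  have "inj_on (\<lambda>j. (j + n) mod N) {..<N}"
  proof
    fix i j assume "i \<in> {..<N}" "j \<in> {..<N}" "(i + n) mod N = (j + n) mod N"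
    moreover from this obtain q1 q2 where "i + n + N * q1 = j + n + N * q2" by (auto simp: nat_mod_eq_iff)
    then have "i mod N = j mod N" by (auto simp: nat_mod_eq_iff)
    ultimately show "i = j" by simp
  qed
  moreover have "(\<lambda>j. (j + n) mod N) ` {..<N} \<subseteq> {..<N}" using assms by auto
  ultimately show ?thesis unfolding bij_betw_def by (simp add: endo_inj_surj)
qed

lemma card_cyclic_window:
  assumes "0 < N" "k \<le> N"
  shows "card {j\<in>{..<N}. (j + n) mod N < k} = k"
proof -
  have "bij_betw (\<lambda>j. (j + n) mod N) {j\<in>{..<N}. (j + n) mod N < k} {..<k}"
    using bij_betw_add_mod[OF assms(1), of n] assms(2)
    by (auto simp: bij_betw_def intro: inj_on_subset)
  then show ?thesis by (simp add: bij_betw_same_card)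
qed

lemma sum_cyclic_window_const:
  assumes "0 < N" "k \<le> N"
  shows "(\<Sum>j<N. if (j + n) mod N < k then c else 0) = real k * c"
  using card_cyclic_window[OF assms, of n] by (simp add: sum.inter_filter[symmetric])

lemma sum_cyclic_windows:
  assumes "0 < N" "k \<le> N"
  shows "(\<Sum>n<N. \<Sum>j<N. if (j + n) mod N < k then r j else 0) = real k * (\<Sum>j<N. r j)"
proof -
  have "(\<Sum>n<N. if (j + n) mod N < k then r j else 0) = real k * r j" for j
    using card_cyclic_window[OF assms, of j] by (simp add: sum.inter_filter[symmetric] add.commute)
  then show ?thesis by (subst sum.swap) (simp add: sum_distrib_left)
qed

section \<open>Multiples close above an integer\<close>

lemma exists_frac_mult_less:
  fixes a e :: real
  assumes "0 < e"
  shows "\<exists>N::nat. 0 < N \<and> frac (real N * a) < e"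
proof (cases "a \<in> \<rat>")
  case True
  then obtain p q where pq: "a = of_int p / of_int q" "0 < q" by (metis Rats_cases')
  then have "frac (real (nat q) * a) = 0" by simp
  then show ?thesis using pq assms by (intro exI[of _ "nat q"]) auto
next
  case False
  then obtain N where "0 < N" "\<bar>frac (real N * a) - 0\<bar> < e"
    using Kronecker_approx_1_explicit[of a 0 e] assms by auto
  then show ?thesis by auto
qed

lemma exists_nat_below_mult_close:
  fixes a e :: real
  assumes "0 < a" "a < 1" "0 < e"
  shows "\<exists>N k :: nat. 0 < N \<and> k < N \<and> real k \<le> real N * a \<and> real N * a - real k < e"
proof -
  obtain N :: nat where N: "0 < N" "frac (real N * a) < e" using exists_frac_mult_less[OF assms(3)] by blast
  define k where "k = nat \<lfloor>real N * a\<rfloor>"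
  have k: "real k \<le> real N * a" "real N * a - real k < e"
    using N(2) assms(1) unfolding k_def frac_def by auto
  have "real N * a < real N" using assms N(1) by simp
  then have "k < N" using k(1) by linarith
  then show ?thesis using N(1) k by blast
qed

section \<open>The cyclic refinement\<close>

lemma sum_lessThan_add_2:
  "(\<Sum>j<N + 2. h j) = (\<Sum>j<N. h j) + h N + h (N + 1 :: nat)"
  by (simp add: numeral_2_eq_2)

text \<open>
  The atoms \<open>x, y, t\<close> stand for \<open>A \<inter> B\<close>, \<open>B - A\<close>, \<open>W - B\<close>; when \<open>B = W\<close> we take \<open>t = x\<close>, and the
  point \<open>N + 1\<close> then has weight \<open>0\<close>. The hypothesis \<open>k_le\<close> is \<open>k \<le> N a\<close> in disguise.
\<close>

locale cyclic_refinement =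
  fixes W0 :: "'w set" and x y t :: 'w and P0 :: "'w set \<Rightarrow> real"
    and N k :: nat and g :: "nat \<Rightarrow> 'w"
  assumes W0: "W0 = {x, y, t}" and x_neq_y: "x \<noteq> y" and t_neq_y: "t \<noteq> y"
    and P0: "P0 \<in> prob_measures W0 (Pow W0)"
    and N_pos: "0 < N" and k_less: "k < N"
    and k_le: "real k * P0 {y} \<le> real (N - k) * P0 {x}"
    and inj_g: "inj g"
begin

definition label :: "nat \<Rightarrow> nat \<Rightarrow> 'w" where
  "label n j = (if j < N then if (j + n) mod N < k then x else y else if j = N then x else t)"

definition mu :: real where
  "mu = P0 {y} / real (N - k)"

definition weight :: "nat \<Rightarrow> real" where
  "weight j = (if j < N then mu else if j = N then P0 {x} - real k * mu else 1 - P0 {x, y})"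

definition points :: "'w set" where
  "points = g ` {..<N + 2}"

definition prior :: "'w set \<Rightarrow> real" where
  "prior = point_mass_measure points (weight \<circ> inv g)"

definition shift :: "nat \<Rightarrow> 'w \<Rightarrow> 'w" where
  "shift n = label n \<circ> inv g"

definition event :: "'w set" where
  "event = g ` {j\<in>{..<N + 2}. j \<le> N \<or> t = x}"

lemma label_image: "label n ` {..<N + 2} = W0"
proof
  show "label n ` {..<N + 2} \<subseteq> W0" unfolding W0 label_def by auto
  have "card {j\<in>{..<N}. (j + n) mod N < k} < card {..<N}"
    using card_cyclic_window[OF N_pos less_imp_le[OF k_less]] k_less by simp
  then have "{j\<in>{..<N}. (j + n) mod N < k} \<noteq> {..<N}" by force
  then obtain j where j: "j < N" "\<not> (j + n) mod N < k" by blast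
  have "x = label n N" "y = label n j" "t = label n (N + 1)" using j unfolding label_def by auto
  moreover have "N \<in> {..<N + 2}" "j \<in> {..<N + 2}" "N + 1 \<in> {..<N + 2}" using j by auto
  ultimately show "W0 \<subseteq> label n ` {..<N + 2}" unfolding W0 by blast
qed

lemma label_in_pair: "label n j \<in> {x, y} \<longleftrightarrow> j \<le> N \<or> t = x"
  using t_neq_y by (auto simp: label_def)

lemma sum_label_x:
  "(\<Sum>j<N + 2. if label n j = x then v j else 0)
     = (\<Sum>j<N. if (j + n) mod N < k then v j else 0) + v N + (if t = x then v (N + 1) else 0)"
proof -
  have "(\<Sum>j<N. if label n j = x then v j else 0) = (\<Sum>j<N. if (j + n) mod N < k then v j else 0)"
    using x_neq_y by (intro sum.cong) (auto simp: label_def)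
  then show ?thesis unfolding sum_lessThan_add_2 by (simp add: label_def)
qed

lemma sum_label_y:
  "(\<Sum>j<N + 2. if label n j = y then v j else 0) = (\<Sum>j<N. if (j + n) mod N < k then 0 else v j)"
proof -
  have "(\<Sum>j<N. if label n j = y then v j else 0) = (\<Sum>j<N. if (j + n) mod N < k then 0 else v j)"
    using x_neq_y by (intro sum.cong) (auto simp: label_def)
  then show ?thesis unfolding sum_lessThan_add_2 using x_neq_y t_neq_y by (simp add: label_def)
qed

lemma sum_label_t:
  assumes "t \<noteq> x"
  shows "(\<Sum>j<N + 2. if label n j = t then v j else 0) = v (N + 1)"
proof -
  have "(\<Sum>j<N. if label n j = t then v j else 0) = 0"
    using assms t_neq_y by (intro sum.neutral) (auto simp: label_def)
  then show ?thesis unfolding sum_lessThan_add_2 using assms by (simp add: label_def)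
qed

lemma P0_pair: "P0 {x, y} = P0 {x} + P0 {y}"
  unfolding insert_is_Un[of x "{y}"] by (rule prob_measures_additive[OF P0]) (use W0 x_neq_y in auto)

lemma mu_scaled: "real (N - k) * mu = P0 {y}"
  using k_less unfolding mu_def by simp

lemma weight_nonneg: "0 \<le> weight j"
proof -
  have "0 \<le> mu" unfolding mu_def using prob_measures_nonneg[OF P0, of "{y}"] W0 by simp
  moreover have "real k * mu \<le> P0 {x}"
    using k_le k_less unfolding mu_def by (simp add: field_simps)
  moreover have "P0 {x, y} \<le> 1" using prob_measures_le_1[OF algebra_Pow P0] W0 by simp
  ultimately show ?thesis unfolding weight_def by simp
qed

lemma sum_weight: "(\<Sum>j<N + 2. weight j) = 1"
proof -
  have "real N * mu = real (N - k) * mu + real k * mu" using k_less by (simp add: algebra_simps)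
  then show ?thesis unfolding sum_lessThan_add_2 weight_def using mu_scaled P0_pair by simp
qed

lemma prior_prob: "prior \<in> prob_measures points (Pow points)"
  unfolding prior_def points_def
proof (rule point_mass_measure_prob_measures)
  have "sum (weight \<circ> inv g) (g ` {..<N + 2}) = sum ((weight \<circ> inv g) \<circ> g) {..<N + 2}"
    by (rule sum.reindex[OF inj_on_subset[OF inj_g subset_UNIV]])
  then show "sum (weight \<circ> inv g) (g ` {..<N + 2}) = 1"
    using sum_weight by (simp add: comp_def inv_f_f[OF inj_g])
qed (simp_all add: weight_nonneg)

lemma prior_singleton: "j < N + 2 \<Longrightarrow> prior {g j} = weight j"
  unfolding prior_def point_mass_measure_def points_def using inj_g by simp

lemma shift_rep_shift: "rep_shift (shift n) points (Pow points) W0 (Pow W0)"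
  unfolding shift_def points_def by (rule rep_shift_relabel[OF inj_g label_image])

lemma vimage_shift_pair: "shift n -` {x, y} \<inter> points = event"
  unfolding shift_def points_def event_def vimage_relabel[OF inj_g] label_in_pair ..

lemma pushforward_shift_singleton:
  "R \<in> prob_measures points (Pow points) \<Longrightarrow> p \<in> W0 \<Longrightarrow>
     pushforward (shift n) points (Pow W0) R {p} = (\<Sum>j<N + 2. if label n j = p then R {g j} else 0)"
  unfolding shift_def points_def by (rule pushforward_relabel_singleton[OF inj_g finite_lessThan])

lemma pushforward_shift_prior: "pushforward (shift n) points (Pow W0) prior = P0"
proof (rule prob_measures_Pow_eqI)
  show "finite W0" unfolding W0 by simp
  show "pushforward (shift n) points (Pow W0) prior \<in> prob_measures W0 (Pow W0)"
    by (rule pushforward_prob_measures[OF algebra_Pow shift_rep_shift prior_prob])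
  show "P0 \<in> prob_measures W0 (Pow W0)" by (rule P0)
  fix p assume p: "p \<in> W0"
  have mass: "pushforward (shift n) points (Pow W0) prior {p} = (\<Sum>j<N + 2. if label n j = p then weight j else 0)"
    unfolding pushforward_shift_singleton[OF prior_prob p] by (auto simp: prior_singleton intro!: sum.cong)
  have "(\<Sum>j<N. if (j + n) mod N < k then weight j else 0) = (\<Sum>j<N. if (j + n) mod N < k then mu else 0)"
    by (rule sum.cong) (simp_all add: weight_def)
  then have window: "(\<Sum>j<N. if (j + n) mod N < k then weight j else 0) = real k * mu"
    using sum_cyclic_window_const[OF N_pos less_imp_le[OF k_less]] by simp
  consider "p = x" | "p = y" | "p = t" "t \<noteq> x" using p W0 by auto
  then show "pushforward (shift n) points (Pow W0) prior {p} = P0 {p}"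
  proof cases
    case 1
    have "t = x \<Longrightarrow> P0 {x, y} = 1" using prob_measures_space[OF P0] W0 by (simp add: insert_commute)
    then show ?thesis using mass unfolding 1 sum_label_x window by (auto simp: weight_def)
  next
    case 2
    have "(\<Sum>j<N. if (j + n) mod N < k then 0 else weight j)
        = (\<Sum>j<N. mu - (if (j + n) mod N < k then mu else 0))"
      by (rule sum.cong) (simp_all add: weight_def)
    also have "\<dots> = real (N - k) * mu"
      using sum_cyclic_window_const[OF N_pos less_imp_le[OF k_less], of n mu] k_less
      by (simp add: sum_subtractf algebra_simps of_nat_diff)
    finally show ?thesis using mass mu_scaled unfolding 2 sum_label_y by simp
  next
    case 3
    have "W0 - {x, y} = {t}" using W0 t_neq_y 3 by auto
    then have "P0 {t} = 1 - P0 {x, y}" using prob_measures_compl[OF algebra_Pow P0, of "{x, y}"] W0 by simp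
    then show ?thesis using mass unfolding 3 sum_label_t[OF 3(2)] by (simp add: weight_def)
  qed
qed

text \<open>Each point of \<open>event\<close> is sent to \<open>x\<close> by at least \<open>k\<close> of the \<open>N\<close> rotations.\<close>

lemma sum_pushforward_shift_ge:
  assumes R: "R \<in> prob_measures points (Pow points)" and "R event = 1"
  shows "real k \<le> (\<Sum>n<N. pushforward (shift n) points (Pow W0) R {x})"
proof -
  define r where "r j = R {g j}" for j
  define T where "T = r N + (if t = x then r (N + 1) else 0)"
  have T_nonneg: "0 \<le> T"
    using prob_measures_nonneg[OF R] unfolding T_def r_def points_def by simp
  have "R event = (\<Sum>j\<in>{j\<in>{..<N + 2}. j \<le> N \<or> t = x}. r j)"
    unfolding event_def r_def using R unfolding points_def
    by (intro prob_measures_Pow_image_sum[OF inj_g finite_lessThan]) auto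
  also have "\<dots> = (\<Sum>j<N. r j) + T"
    unfolding sum.inter_filter[OF finite_lessThan] sum_lessThan_add_2 T_def by simp
  finally have total: "(\<Sum>j<N. r j) + T = 1" using assms(2) by simp
  have "x \<in> W0" using W0 by simp
  have "pushforward (shift n) points (Pow W0) R {x} = (\<Sum>j<N. if (j + n) mod N < k then r j else 0) + T" for n
    unfolding pushforward_shift_singleton[OF R \<open>x \<in> W0\<close>] sum_label_x r_def T_def by (simp only: add.assoc)
  then have "(\<Sum>n<N. pushforward (shift n) points (Pow W0) R {x})
      = (\<Sum>n<N. (\<Sum>j<N. if (j + n) mod N < k then r j else 0) + T)"
    by simp
  also have "\<dots> = real k * (\<Sum>j<N. r j) + real N * T"
    by (simp add: sum.distrib sum_cyclic_windows[OF N_pos less_imp_le[OF k_less]])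
  also have "\<dots> = real k * ((\<Sum>j<N. r j) + T) + (real N - real k) * T"
    by (simp add: algebra_simps)
  also have "\<dots> = real k + (real N - real k) * T"
    unfolding total by simp
  finally show ?thesis using T_nonneg k_less by simp
qed

end

section \<open>Reduction to three atoms\<close>

lemma P1D:
  "P1 Upd \<Longrightarrow> algebra W F \<Longrightarrow> X \<subseteq> prob_measures W F \<Longrightarrow> B \<in> F \<Longrightarrow> R \<in> Upd W F X B \<Longrightarrow>
     R \<in> prob_measures W F \<and> R B = 1"
  unfolding P1_def by blast

lemma P2D:
  "P2 Upd \<Longrightarrow> algebra W F \<Longrightarrow> algebra W' F' \<Longrightarrow> rep_shift f W F W' F' \<Longrightarrow> X \<subseteq> prob_measures W F \<Longrightarrow>
     B \<in> F' \<Longrightarrow> Upd W' F' (pushforward f W F' ` X) B = pushforward f W F' ` Upd W F X (f -` B \<inter> W)"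
  unfolding P2_def by blast

lemma three_point_update_mass_ge:
  fixes Upd :: "'w upd_family"
  assumes universe: "infinite (UNIV :: 'w set)" and p1: "P1 Upd" and p2: "P2 Upd"
    and W0: "W0 = {x, y, t}" "x \<noteq> y" "t \<noteq> y"
    and P0: "P0 \<in> prob_measures W0 (Pow W0)" "0 < P0 {x}" "0 < P0 {y}"
    and bound: "\<forall>R\<in>Upd W0 (Pow W0) {P0} {x, y}. R {x} \<le> P0 {x} / (P0 {x} + P0 {y})"
    and R0: "R0 \<in> Upd W0 (Pow W0) {P0} {x, y}"
  shows "P0 {x} / (P0 {x} + P0 {y}) \<le> R0 {x}"
proof (rule ccontr)
  define a where "a = P0 {x} / (P0 {x} + P0 {y})"
  assume "\<not> a \<le> R0 {x}"
  moreover have a: "0 < a" "a < 1" unfolding a_def using P0 by (auto simp: field_simps)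
  ultimately obtain N k :: nat where N: "0 < N" "k < N"
    and k: "real k \<le> real N * a" "real N * a - real k < a - R0 {x}"
    using exists_nat_below_mult_close[of a "a - R0 {x}"] by auto
  have "real k * (P0 {x} + P0 {y}) \<le> real N * P0 {x}"
    using k(1) P0 unfolding a_def by (simp add: field_simps)
  then have "real k * P0 {y} \<le> real (N - k) * P0 {x}"
    using N(2) by (simp add: of_nat_diff left_diff_distrib distrib_left)
  moreover obtain g :: "nat \<Rightarrow> 'w" where "inj g" using infinite_countable_subset[OF universe] by blast
  ultimately interpret cyclic_refinement W0 x y t P0 N k g
    using W0 P0 N by unfold_locales auto
  have "{x, y} \<in> Pow W0" using W0 by auto
  then have U: "Upd W0 (Pow W0) {P0} {x, y}
      = pushforward (shift n) points (Pow W0) ` Upd points (Pow points) {prior} event" for n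
    using P2D[OF p2 algebra_Pow algebra_Pow shift_rep_shift, of "{prior}" "{x, y}"] prior_prob
    by (simp add: pushforward_shift_prior vimage_shift_pair)
  then obtain R where R: "R \<in> Upd points (Pow points) {prior} event"
    and R0_eq: "R0 = pushforward (shift 0) points (Pow W0) R"
    using R0 by blast
  have "event \<subseteq> points" unfolding event_def points_def by auto
  then have "R \<in> prob_measures points (Pow points)" "R event = 1"
    using P1D[OF p1 algebra_Pow _ _ R] prior_prob by auto
  then have "real k \<le> (\<Sum>n<N. pushforward (shift n) points (Pow W0) R {x})"
    by (rule sum_pushforward_shift_ge)
  also have "\<dots> \<le> (\<Sum>n<N. a - (if n = 0 then a - R0 {x} else 0))"
  proof (rule sum_mono)
    fix n
    have "pushforward (shift n) points (Pow W0) R \<in> Upd W0 (Pow W0) {P0} {x, y}"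
      using U[of n] R by blast
    then have "pushforward (shift n) points (Pow W0) R {x} \<le> a" using bound unfolding a_def by blast
    then show "pushforward (shift n) points (Pow W0) R {x} \<le> a - (if n = 0 then a - R0 {x} else 0)"
      using R0_eq by simp
  qed
  also have "\<dots> = real N * a - (a - R0 {x})" using N(1) by (simp add: sum_subtractf)
  finally show False using k(2) by linarith
qed

lemma three_cell_coarsening:
  assumes universe: "infinite (UNIV :: 'w set)" and M: "algebra W F" and A: "A \<in> F" and B: "B \<in> F"
    and "A \<inter> B \<noteq> {}" "B - A \<noteq> {}"
  obtains c :: "'w \<Rightarrow> 'w" and x y t where "c ` W = {x, y, t}" "x \<noteq> y" "t \<noteq> y"
    "rep_shift c W F (c ` W) (Pow (c ` W))"
    "c -` {x} \<inter> W = A \<inter> B" "c -` {y} \<inter> W = B - A" "c -` {x, y} \<inter> W = B"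
proof -
  interpret algebra W F by (rule M)
  obtain g :: "nat \<Rightarrow> 'w" where "inj g" using infinite_countable_subset[OF universe] by blast
  define x y z where "x = g 0" and "y = g 1" and "z = g 2"
  have xyz: "x \<noteq> y" "x \<noteq> z" "y \<noteq> z" using \<open>inj g\<close> unfolding x_def y_def z_def inj_def by fastforce+
  define c where "c w = (if w \<in> A \<inter> B then x else if w \<in> B then y else z)" for w
  define t where "t = (if W \<subseteq> B then x else z)"
  have AB: "A \<subseteq> W" "B \<subseteq> W" using A B sets_into_space by auto
  have vimage_c: "c -` S \<inter> W = (if x \<in> S then A \<inter> B else {}) \<union> (if y \<in> S then B - A else {})
      \<union> (if z \<in> S then W - B else {})" for S
    using xyz AB unfolding c_def by (auto split: if_splits)
  have "c ` W \<subseteq> {x, y, t}" unfolding c_def t_def by auto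
  moreover have "x \<in> c ` W" "y \<in> c ` W" using assms(5,6) AB unfolding c_def by force+
  moreover have "t \<in> c ` W" using \<open>x \<in> c ` W\<close> unfolding c_def t_def by force
  ultimately have "c ` W = {x, y, t}" by blast
  moreover have "rep_shift c W F (c ` W) (Pow (c ` W))"
    unfolding rep_shift_def vimage_c using A B by auto
  moreover have "c -` {x} \<inter> W = A \<inter> B" "c -` {y} \<inter> W = B - A" "c -` {x, y} \<inter> W = B"
    unfolding vimage_c using xyz AB by auto
  moreover have "t \<noteq> y" using xyz unfolding t_def by simp
  ultimately show thesis using that xyz by blast
qed
lemma cond_prob_pos_Int_Diff:
  assumes M: "algebra W F" and Pr: "Pr \<in> prob_measures W F" and A: "A \<in> F" and B: "B \<in> F"
    and pos: "0 < cond_prob Pr A B" and lt1: "cond_prob Pr A B < 1"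
  shows "0 < Pr (A \<inter> B)" "0 < Pr (B - A)"
proof -
  interpret algebra W F by (rule M)
  have split: "Pr B = Pr (A \<inter> B) + Pr (B - A)"
    using prob_measures_Int_Diff[OF M Pr B A] by (simp add: Int_commute)
  have "0 \<le> Pr (A \<inter> B)" "0 \<le> Pr (B - A)" using prob_measures_nonneg[OF Pr] A B by auto
  then have "0 < Pr B" using pos split unfolding cond_prob_def by (auto simp: zero_less_divide_iff)
  then show "0 < Pr (A \<inter> B)" "0 < Pr (B - A)"
    using pos lt1 split unfolding cond_prob_def by (simp_all add: zero_less_divide_iff divide_less_eq)
qed

lemma cond_prob_le_update_Int:
  fixes Upd :: "'w upd_family"
  assumes universe: "infinite (UNIV :: 'w set)" and p1: "P1 Upd" and p2: "P2 Upd"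
    and M: "algebra W F" and Pr: "Pr \<in> prob_measures W F" and A: "A \<in> F" and B: "B \<in> F"
    and pos: "0 < Pr (A \<inter> B)" "0 < Pr (B - A)"
    and bound: "\<forall>R\<in>Upd W F {Pr} B. R (A \<inter> B) \<le> cond_prob Pr A B"
    and R0: "R0 \<in> Upd W F {Pr} B"
  shows "cond_prob Pr A B \<le> R0 (A \<inter> B)"
proof -
  have "Pr {} = 0" by (rule prob_measures_empty[OF M Pr])
  then have "A \<inter> B \<noteq> {}" "B - A \<noteq> {}" using pos by (metis less_irrefl, metis less_irrefl)
  then obtain c x y t where c: "c ` W = {x, y, t}" "x \<noteq> y" "t \<noteq> y"
    "rep_shift c W F (c ` W) (Pow (c ` W))"
    "c -` {x} \<inter> W = A \<inter> B" "c -` {y} \<inter> W = B - A" "c -` {x, y} \<inter> W = B"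
    by (rule three_cell_coarsening[OF universe M A B])
  let ?push = "pushforward c W (Pow (c ` W))"
  have push: "?push R {x} = R (A \<inter> B)" "?push R {y} = R (B - A)" for R
    using c unfolding pushforward_def by auto
  have U: "Upd (c ` W) (Pow (c ` W)) {?push Pr} {x, y} = ?push ` Upd W F {Pr} B"
    using P2D[OF p2 M algebra_Pow c(4), of "{Pr}" "{x, y}"] Pr c by simp
  have cond: "cond_prob Pr A B = ?push Pr {x} / (?push Pr {x} + ?push Pr {y})"
    unfolding cond_prob_def push prob_measures_Int_Diff[OF M Pr B A] by (simp add: Int_commute)
  have "?push Pr \<in> prob_measures (c ` W) (Pow (c ` W))"
    by (rule pushforward_prob_measures[OF algebra_Pow c(4) Pr])
  moreover have "0 < ?push Pr {x}" "0 < ?push Pr {y}" unfolding push by (fact pos)+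
  moreover have "\<forall>R0\<in>Upd (c ` W) (Pow (c ` W)) {?push Pr} {x, y}.
      R0 {x} \<le> ?push Pr {x} / (?push Pr {x} + ?push Pr {y})"
    using U bound push unfolding cond[symmetric] by auto
  moreover have "?push R0 \<in> Upd (c ` W) (Pow (c ` W)) {?push Pr} {x, y}" using U R0 by blast
  ultimately have "?push Pr {x} / (?push Pr {x} + ?push Pr {y}) \<le> ?push R0 {x}"
    by (rule three_point_update_mass_ge[OF universe p1 p2 c(1-3)])
  then show ?thesis unfolding cond push .
qed

theorem proposition4p3:
  fixes Upd :: "'w upd_family" and W :: "'w set" and F :: "'w set set"
    and Pr Pr' :: "'w set \<Rightarrow> real" and A B :: "'w set"
  assumes universe: "infinite (UNIV :: 'w set)"
    and fam: "family_of_update_functions Upd"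
    and p1: "P1 Upd" and p2: "P2 Upd"
    and M: "algebra W F"
    and Pr: "Pr \<in> prob_measures W F"
    and A: "A \<in> F" and B: "B \<in> F"
    and Pr': "Pr' \<in> Upd W F {Pr} B"
    and pos: "0 < cond_prob Pr A B" and lt1: "cond_prob Pr A B < 1"
    and below: "Pr' A < cond_prob Pr A B"
  shows "\<exists>Pr''\<in>Upd W F {Pr} B. Pr'' A > cond_prob Pr A B"
proof (rule ccontr)
  assume none_above: "\<not> ?thesis"
  have Int_le: "R (A \<inter> B) \<le> R A" if "R \<in> Upd W F {Pr} B" for R
    using P1D[OF p1 M _ B that] Pr prob_measures_Int_le[OF M _ A B] by blast
  have "\<forall>R\<in>Upd W F {Pr} B. R (A \<inter> B) \<le> cond_prob Pr A B"
    using none_above Int_le by (meson not_less order_trans)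
  then have "cond_prob Pr A B \<le> Pr' (A \<inter> B)"
    using cond_prob_le_update_Int[OF universe p1 p2 M Pr A B cond_prob_pos_Int_Diff[OF M Pr A B pos lt1]] Pr'
    by blast
  then show False using Int_le[OF Pr'] below by simp
qed

end
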